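(* Let $d\geq 1$ and let $c>b>0$ be integers with $d$-binomial expansions $b=\binom{b_d}{d}+\cdots+\binom{b_j}{j}$, $b_d>b_{d-1}>\cdots>b_j\geq j\geq 1$, and $c=\binom{c_d}{d}+\cdots+\binom{c_i}{i}$, $c_d>\cdots>c_i\geq i\geq 1$. Then $b^{(d)}=c^{(d)}$ if and only if $j\geq 2$ and $c-b\leq j-1$.
   Context: For a positive integer $d$, every integer $a>0$ has a unique representation (the $d$-binomial or Macaulay expansion) $a=\binom{a_d}{d}+\binom{a_{d-1}}{d-1}+\cdots+\binom{a_j}{j}$ with $a_d>a_{d-1}>\cdots>a_j\geq j\geq 1$. For such an expansion one defines $a^{(d)}=\binom{a_d}{d+1}+\cdots+\binom{a_j}{j+1}$ (with $\binom{m}{r}=0$ for $m<r$). *)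

theory Defs
  imports Main
begin

text \<open>A d-binomial (Macaulay) expansion of a is encoded by the list
  xs = [a_d, a_(d-1), ..., a_j], i.e. xs ! k = a_(d-k), with j = d + 1 - length xs.\<close>

definition macaulay_rep :: "nat \<Rightarrow> nat \<Rightarrow> nat list \<Rightarrow> bool" where
  "macaulay_rep d a xs \<longleftrightarrow>
     xs \<noteq> [] \<and> length xs \<le> d \<and> sorted_wrt (>) xs \<and>
     last xs \<ge> d + 1 - length xs \<and>
     a = (\<Sum>k<length xs. (xs ! k) choose (d - k))"

definition macaulay_low :: "nat \<Rightarrow> nat list \<Rightarrow> nat" where
  "macaulay_low d xs = d + 1 - length xs"

definition macaulay_upper :: "nat \<Rightarrow> nat \<Rightarrow> nat" where
  "macaulay_upper d a =
     (let xs = (THE xs. macaulay_rep d a xs)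
      in (\<Sum>k<length xs. (xs ! k) choose (d - k + 1)))"

end

theory Submission
  imports Defs
begin

(* Pad a d-binomial expansion [a_d, ..., a_j] to a function G on {1..d} by
   setting G i = i - 1 below the lowest index j.  Then G is strictly increasing, and
   a = (SUM i=1..d. G i choose i) and a^(d) = (SUM i=1..d. G i choose (i+1)), since the
   padding terms vanish.  Two expansions G, H are compared at the largest index t where
   they differ, say G t < H t.  If j <= t, the classical tail bound (a hockey-stick
   estimate) shows that the terms of G up to t sum to at most (G t + 1 choose t) - j,
   and their upper sum is below (G t + 1 choose t + 1); hence H has upper value strictly
   larger and value larger by at least j.  If t < j, the terms of G up to t vanish,
   agreement above t forces j = t + 1, and the upper sum of H up to t vanishes exactly
   when its lower sum is at most t.  The comparison first gives uniqueness of expansions,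
   which identifies macaulay_upper with the padded upper sum; the main theorem is then
   the comparison applied to the expansions of b < c. *)

lemma sum_choose_diagonal_from_1:
  "(\<Sum>i=1..t. (m + i) choose i) + 1 = (m + t + 1) choose t"
  by (induction t) (auto simp: add.commute)

lemma sum_choose_diagonal_shifted:
  "(\<Sum>i=1..t. (m + i) choose (i + 1)) + m + 1 = (m + t + 1) choose (t + 1)"
  by (induction t) (auto simp: add.commute)

(* The sum (SUM i=1..t. G i choose (i + r)): for r = 0 the value of an expansion,
   for r = 1 its Macaulay upper value, both truncated at index t. *)
definition binom_sum :: "nat \<Rightarrow> (nat \<Rightarrow> nat) \<Rightarrow> nat \<Rightarrow> nat" where
  "binom_sum r G t = (\<Sum>i=1..t. G i choose (i + r))"

lemma binom_sum_split:
  assumes "t \<le> d"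
  shows "binom_sum r G d = binom_sum r G t + (\<Sum>i=Suc t..d. G i choose (i + r))"
proof -
  have "{1..d} = {1..t} \<union> {Suc t..d}" using assms by auto
  then show ?thesis unfolding binom_sum_def by (simp add: sum.union_disjoint)
qed

lemma strict_inc_gap:
  fixes G :: "nat \<Rightarrow> nat"
  assumes inc: "\<And>i. 1 \<le> i \<Longrightarrow> i < d \<Longrightarrow> G i < G (Suc i)"
    and "1 \<le> i" "i \<le> k" "k \<le> d"
  shows "G i + (k - i) \<le> G k"
  using assms(3,4)
proof (induction k rule: dec_induct)
  case base
  then show ?case by simp
next
  case (step n)
  then have "G n < G (Suc n)" using inc \<open>1 \<le> i\<close> by simp
  with step show ?case by simp
qed

definition macaulay_seq :: "nat \<Rightarrow> nat \<Rightarrow> (nat \<Rightarrow> nat) \<Rightarrow> bool" where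
  "macaulay_seq d j G \<longleftrightarrow> 1 \<le> j \<and> j \<le> d \<and>
     (\<forall>i. 1 \<le> i \<longrightarrow> i < d \<longrightarrow> G i < G (Suc i)) \<and>
     (\<forall>i. 1 \<le> i \<longrightarrow> i < j \<longrightarrow> G i = i - 1) \<and> j \<le> G j"

lemma macaulay_seq_gap:
  assumes "macaulay_seq d j G" "1 \<le> i" "i \<le> k" "k \<le> d"
  shows "G i + (k - i) \<le> G k"
  using strict_inc_gap[of d G i k] assms unfolding macaulay_seq_def by blast

lemma macaulay_seq_above_iff:
  assumes G: "macaulay_seq d j G" and i: "1 \<le> i" "i \<le> d"
  shows "i \<le> G i \<longleftrightarrow> j \<le> i"
proof
  assume "i \<le> G i"
  show "j \<le> i"
  proof (rule ccontr)
    assume "\<not> j \<le> i"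
    then have "G i = i - 1" using G i unfolding macaulay_seq_def by simp
    with \<open>i \<le> G i\<close> i show False by simp
  qed
next
  assume "j \<le> i"
  then have "G j + (i - j) \<le> G i" using macaulay_seq_gap[OF G] G i unfolding macaulay_seq_def by blast
  moreover have "j \<le> G j" using G unfolding macaulay_seq_def by simp
  ultimately show "i \<le> G i" using \<open>j \<le> i\<close> by linarith
qed

lemma macaulay_tail_bound:
  assumes G: "macaulay_seq d j G" and t: "j \<le> t" "t \<le> d"
  shows "binom_sum 0 G t + j \<le> (G t + 1) choose t"
    and "binom_sum 1 G t < (G t + 1) choose (t + 1)"
proof -
  have j: "1 \<le> j" and below: "\<And>i. 1 \<le> i \<Longrightarrow> i < j \<Longrightarrow> G i = i - 1"
    using G unfolding macaulay_seq_def by auto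
  have "t \<le> G t" using macaulay_seq_above_iff[OF G] j t by simp
  define m where "m = G t - t"
  have Gt: "G t + 1 = m + t + 1" using \<open>t \<le> G t\<close> unfolding m_def by simp
  have bound: "G i \<le> m + i" if "i \<in> {1..t}" for i
    using macaulay_seq_gap[OF G, of i t] that t unfolding m_def by auto
  have termwise: "(G i choose i) + (if i < j then 1 else 0) \<le> (m + i) choose i"
    if i: "i \<in> {1..t}" for i
  proof (cases "i < j")
    case True
    then have "G i choose i = 0" using below[of i] i by simp
    moreover have "0 < (m + i) choose i" by simp
    ultimately show ?thesis using True by (simp del: binomial_eq_0_iff zero_less_binomial_iff)
  next
    case False
    then show ?thesis using binomial_right_mono[OF bound[OF i]] by simp
  qed
  have "{1..t} \<inter> {i. i < j} = {1..<j}" using t by auto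
  then have count: "(\<Sum>i=1..t. (if i < j then 1 else 0::nat)) = j - 1"
    by (simp add: sum.If_cases)
  have "binom_sum 0 G t + (j - 1) \<le> (\<Sum>i=1..t. (m + i) choose i)"
    unfolding binom_sum_def count[symmetric] sum.distrib[symmetric]
    using termwise by (intro sum_mono) simp
  then show "binom_sum 0 G t + j \<le> (G t + 1) choose t"
    using sum_choose_diagonal_from_1[of m t] Gt j by simp
  have "binom_sum 1 G t \<le> (\<Sum>i=1..t. (m + i) choose (i + 1))"
    unfolding binom_sum_def by (intro sum_mono binomial_right_mono bound)
  then show "binom_sum 1 G t < (G t + 1) choose (t + 1)"
    using sum_choose_diagonal_shifted[of m t] Gt by simp
qed

lemma choose_le_binom_sum:
  assumes "1 \<le> t"
  shows "H t choose (t + r) \<le> binom_sum r H t"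
  unfolding binom_sum_def using assms by (intro member_le_sum) auto

(* For a strictly increasing H, the upper sum vanishes iff all H i <= i,
   which happens iff the lower sum is at most t. *)
lemma binom_sum_upper_zero_iff:
  fixes H :: "nat \<Rightarrow> nat"
  assumes inc: "\<And>i. 1 \<le> i \<Longrightarrow> i < d \<Longrightarrow> H i < H (Suc i)"
    and t: "1 \<le> t" "t \<le> d"
  shows "binom_sum 1 H t = 0 \<longleftrightarrow> binom_sum 0 H t \<le> t"
proof
  assume "binom_sum 1 H t = 0"
  then have "H i choose (i + 1) = 0" if "i \<in> {1..t}" for i
    using that unfolding binom_sum_def by simp
  then have below_diag: "H i \<le> i" if "i \<in> {1..t}" for i
    using that by fastforce
  have "H i choose i \<le> 1" if "i \<in> {1..t}" for i
  proof (cases "H i = i")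
    case False
    then have "H i < i" using below_diag[OF that] by simp
    then show ?thesis by (simp add: binomial_eq_0)
  qed simp
  then have "binom_sum 0 H t \<le> (\<Sum>i=1..t. (1::nat))"
    unfolding binom_sum_def by (intro sum_mono) simp
  then show "binom_sum 0 H t \<le> t" by simp
next
  assume small: "binom_sum 0 H t \<le> t"
  show "binom_sum 1 H t = 0"
  proof (rule ccontr)
    assume "binom_sum 1 H t \<noteq> 0"
    then obtain i where i: "i \<in> {1..t}" and "H i choose (i + 1) \<noteq> 0"
      unfolding binom_sum_def by (rule sum.not_neutral_contains_not_neutral)
    then have "i + 1 \<le> H i" by simp
    then have "Suc t \<le> H t" using strict_inc_gap[of d H i t, OF inc] i t by simp
    then have "Suc t choose t \<le> H t choose t" by (rule binomial_right_mono)
    then show False using choose_le_binom_sum[OF t(1), of H 0, unfolded add_0_right] small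
      binomial_Suc_n[of t] by linarith
  qed
qed

lemma compare_above_low:
  assumes G: "macaulay_seq d j G" and t: "1 \<le> t" "j \<le> t" "t \<le> d" and less: "G t < H t"
  shows "binom_sum 0 G t + j \<le> binom_sum 0 H t"
    and "binom_sum 1 G t < binom_sum 1 H t"
proof -
  have "(G t + 1) choose t \<le> H t choose t"
    using less by (intro binomial_right_mono) simp
  moreover have "(G t + 1) choose (t + 1) \<le> H t choose (t + 1)"
    using less by (intro binomial_right_mono) simp
  ultimately show "binom_sum 0 G t + j \<le> binom_sum 0 H t" "binom_sum 1 G t < binom_sum 1 H t"
    using macaulay_tail_bound[OF G t(2,3)] choose_le_binom_sum[OF t(1), of H 0, unfolded add_0_right]
      choose_le_binom_sum[OF t(1), of H 1] by linarith+
qed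

lemma compare_below_low:
  assumes G: "macaulay_seq d j G" and H: "macaulay_seq d k H"
    and t: "1 \<le> t" "t < j" and less: "G t < H t"
    and next_agree: "Suc t \<le> d \<Longrightarrow> G (Suc t) = H (Suc t)"
  shows "binom_sum 0 G t = 0" and "binom_sum 1 G t = 0" and "j = t + 1"
    and "0 < binom_sum 0 H t"
    and "binom_sum 1 H t = 0 \<longleftrightarrow> binom_sum 0 H t \<le> t"
proof -
  have below: "\<And>i. 1 \<le> i \<Longrightarrow> i < j \<Longrightarrow> G i = i - 1" and "j \<le> d"
    and inc: "\<And>i. 1 \<le> i \<Longrightarrow> i < d \<Longrightarrow> H i < H (Suc i)"
    using G H unfolding macaulay_seq_def by auto
  show "binom_sum 0 G t = 0" "binom_sum 1 G t = 0"
    unfolding binom_sum_def using below t by auto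
  have Gt: "G t = t - 1" using below t by simp
  show "j = t + 1"
  proof (rule ccontr)
    assume "j \<noteq> t + 1"
    then have "Suc t < j" using t by simp
    then have "H (Suc t) = t" using below[of "Suc t"] next_agree \<open>j \<le> d\<close> by simp
    moreover have "H t < H (Suc t)" using inc[of t] t \<open>Suc t < j\<close> \<open>j \<le> d\<close> by simp
    ultimately show False using less Gt by simp
  qed
  then have "t \<le> d" using \<open>j \<le> d\<close> by simp
  have "t \<le> H t" using less Gt by simp
  then show "0 < binom_sum 0 H t"
    using choose_le_binom_sum[OF t(1), of H 0, unfolded add_0_right] zero_less_binomial[of t "H t"]
    by linarith
  show "binom_sum 1 H t = 0 \<longleftrightarrow> binom_sum 0 H t \<le> t"
    using binom_sum_upper_zero_iff[of d H t, OF inc t(1) \<open>t \<le> d\<close>] .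
qed

lemma macaulay_compare:
  assumes G: "macaulay_seq d j G" and H: "macaulay_seq d k H"
    and t: "1 \<le> t" "t \<le> d" and less: "G t < H t"
    and agree: "\<And>i. t < i \<Longrightarrow> i \<le> d \<Longrightarrow> G i = H i"
  shows "binom_sum 0 G d < binom_sum 0 H d"
    and "binom_sum 1 G d = binom_sum 1 H d \<longleftrightarrow>
         2 \<le> j \<and> binom_sum 0 H d - binom_sum 0 G d \<le> j - 1"
proof -
  have tails: "(\<Sum>i=Suc t..d. G i choose (i + r)) = (\<Sum>i=Suc t..d. H i choose (i + r))" for r
    using agree by (intro sum.cong) auto
  have split: "binom_sum r G d - binom_sum r G t = binom_sum r H d - binom_sum r H t"
    "binom_sum r G t \<le> binom_sum r G d" "binom_sum r H t \<le> binom_sum r H d" for r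
    using binom_sum_split[OF t(2), of r G] binom_sum_split[OF t(2), of r H] tails[of r] by simp_all
  have partial: "binom_sum 0 G t < binom_sum 0 H t \<and>
      (binom_sum 1 G t = binom_sum 1 H t \<longleftrightarrow>
       2 \<le> j \<and> binom_sum 0 H t - binom_sum 0 G t \<le> j - 1)"
  proof (cases "j \<le> t")
    case True
    with compare_above_low[where H=H, OF G t(1) True t(2) less] G show ?thesis
      unfolding macaulay_seq_def by auto
  next
    case False
    then show ?thesis using compare_below_low[OF G H t(1) _ less] agree t by auto
  qed
  then show "binom_sum 0 G d < binom_sum 0 H d"
    "binom_sum 1 G d = binom_sum 1 H d \<longleftrightarrow>
     2 \<le> j \<and> binom_sum 0 H d - binom_sum 0 G d \<le> j - 1"
    using split[of 0] split[of 1] by linarith+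
qed

lemma top_difference:
  fixes G H :: "nat \<Rightarrow> 'a"
  assumes "\<exists>i\<in>{1..d}. G i \<noteq> H i"
  obtains t where "1 \<le> t" "t \<le> d" "G t \<noteq> H t" "\<And>i. t < i \<Longrightarrow> i \<le> d \<Longrightarrow> G i = H i"
proof -
  define D where "D = {i\<in>{1..d}. G i \<noteq> H i}"
  have D: "i \<in> D \<longleftrightarrow> 1 \<le> i \<and> i \<le> d \<and> G i \<noteq> H i" for i
    unfolding D_def by simp
  have fin: "finite D" unfolding D_def by simp
  moreover have "D \<noteq> {}" using assms D by auto
  ultimately have top: "Max D \<in> D" by simp
  have "G i = H i" if "Max D < i" "i \<le> d" for i
  proof (rule ccontr)
    assume "G i \<noteq> H i"
    then have "i \<in> D" using D[of i] D[of "Max D"] top that by simp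
    with Max_ge[OF fin] that(1) show False by (meson not_le)
  qed
  with top D[of "Max D"] that[of "Max D"] show ?thesis by blast
qed

definition padded_coeff :: "nat \<Rightarrow> nat list \<Rightarrow> nat \<Rightarrow> nat" where
  "padded_coeff d xs i = (if i + length xs \<le> d then i - 1 else xs ! (d - i))"

lemma padded_coeff_nth: "k < length xs \<Longrightarrow> length xs \<le> d \<Longrightarrow> padded_coeff d xs (d - k) = xs ! k"
  unfolding padded_coeff_def by auto

lemma macaulay_rep_seq:
  assumes "macaulay_rep d a xs"
  shows "macaulay_seq d (macaulay_low d xs) (padded_coeff d xs)"
proof -
  let ?L = "length xs" and ?G = "padded_coeff d xs"
  have ne: "xs \<noteq> []" and Ld: "?L \<le> d" and sorted: "sorted_wrt (>) xs"
    and la: "last xs \<ge> d + 1 - ?L"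
    using assms unfolding macaulay_rep_def by auto
  have L1: "1 \<le> ?L" using ne by (cases xs) auto
  have lastn: "?G (d + 1 - ?L) = last xs"
    using ne L1 Ld unfolding padded_coeff_def by (simp add: last_conv_nth)
  have "?G i < ?G (Suc i)" if i: "1 \<le> i" "i < d" for i
  proof -
    consider "Suc i + ?L \<le> d" | "i + ?L = d" | "d < i + ?L" by linarith
    then show ?thesis
    proof cases
      case 1
      then show ?thesis using i unfolding padded_coeff_def by auto
    next
      case 2
      then show ?thesis using lastn la unfolding padded_coeff_def by auto
    next
      case 3
      then show ?thesis using sorted i unfolding padded_coeff_def
        by (auto simp: sorted_wrt_iff_nth_less)
    qed
  qed
  then show ?thesis using L1 Ld la lastn unfolding macaulay_seq_def macaulay_low_def
    by (auto simp: padded_coeff_def)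
qed

(* Both the value and the upper value of an expansion are sums over the padded
   function, since the padding terms (i - 1 choose i + r) vanish. *)
lemma padded_binom_sum:
  assumes Ld: "length xs \<le> d"
  shows "(\<Sum>k<length xs. xs ! k choose (d - k + r)) = binom_sum r (padded_coeff d xs) d"
proof -
  let ?F = "\<lambda>i. padded_coeff d xs i choose (i + r)"
  have "(\<Sum>k<length xs. xs ! k choose (d - k + r)) = (\<Sum>k<length xs. ?F (d - k))"
    using padded_coeff_nth[OF _ Ld] Ld by (intro sum.cong) auto
  also have "\<dots> = (\<Sum>i\<in>{d + 1 - length xs..d}. ?F i)"
    by (rule sum.reindex_bij_witness[where i="\<lambda>i. d - i" and j="\<lambda>k. d - k"]) (use Ld in auto)
  also have "\<dots> = (\<Sum>i=1..d. ?F i)"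
    by (rule sum.mono_neutral_left) (use Ld in \<open>auto simp: padded_coeff_def\<close>)
  finally show ?thesis unfolding binom_sum_def .
qed

lemma macaulay_rep_value:
  assumes "macaulay_rep d a xs"
  shows "a = binom_sum 0 (padded_coeff d xs) d"
  using assms padded_binom_sum[of xs d 0] unfolding macaulay_rep_def by simp

(* The padded function determines the expansion: it determines the lowest index and
   then every entry. *)
lemma padded_coeff_inj:
  assumes rx: "macaulay_rep d a xs" and ry: "macaulay_rep d a' ys"
    and agree: "\<forall>i\<in>{1..d}. padded_coeff d xs i = padded_coeff d ys i"
  shows "xs = ys"
proof -
  note sx = macaulay_rep_seq[OF rx] and sy = macaulay_rep_seq[OF ry]
  have lows: "1 \<le> macaulay_low d zs \<and> macaulay_low d zs \<le> d" if "macaulay_rep d e zs" for e zs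
    using macaulay_rep_seq[OF that] unfolding macaulay_seq_def by simp
  have "macaulay_low d xs \<le> i \<longleftrightarrow> macaulay_low d ys \<le> i" if "1 \<le> i" "i \<le> d" for i
    using macaulay_seq_above_iff[OF sx that] macaulay_seq_above_iff[OF sy that] agree that by simp
  then have "macaulay_low d xs = macaulay_low d ys"
    using lows[OF rx] lows[OF ry] by (meson le_antisym order_refl)
  moreover have "length xs \<le> d" "length ys \<le> d" "xs \<noteq> []" "ys \<noteq> []"
    using rx ry unfolding macaulay_rep_def by auto
  ultimately have L: "length xs = length ys" unfolding macaulay_low_def by simp
  show ?thesis
  proof (rule nth_equalityI[OF L])
    fix k assume k: "k < length xs"
    then have "padded_coeff d xs (d - k) = padded_coeff d ys (d - k)"
      using agree \<open>length xs \<le> d\<close> by auto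
    then show "xs ! k = ys ! k"
      using padded_coeff_nth k L \<open>length xs \<le> d\<close> \<open>length ys \<le> d\<close> by simp
  qed
qed

lemma macaulay_rep_compare:
  assumes rx: "macaulay_rep d a xs" and ry: "macaulay_rep d a' ys"
    and le: "a \<le> a'" and ne: "xs \<noteq> ys"
  shows "a < a'"
    and "binom_sum 1 (padded_coeff d xs) d = binom_sum 1 (padded_coeff d ys) d \<longleftrightarrow>
         2 \<le> macaulay_low d xs \<and> a' - a \<le> macaulay_low d xs - 1"
proof -
  let ?G = "padded_coeff d xs" and ?H = "padded_coeff d ys"
  note sx = macaulay_rep_seq[OF rx] and sy = macaulay_rep_seq[OF ry]
  have "\<exists>i\<in>{1..d}. ?G i \<noteq> ?H i" using padded_coeff_inj[OF rx ry] ne by blast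
  then obtain t where t: "1 \<le> t" "t \<le> d" "?G t \<noteq> ?H t"
    and agree: "\<And>i. t < i \<Longrightarrow> i \<le> d \<Longrightarrow> ?G i = ?H i"
    by (rule top_difference) blast+
  have "\<not> ?H t < ?G t"
    using macaulay_compare(1)[OF sy sx t(1,2)] agree le
      macaulay_rep_value[OF rx] macaulay_rep_value[OF ry] by force
  then have "?G t < ?H t" using t(3) by simp
  note cmp = macaulay_compare[OF sx sy t(1,2) this agree]
  show "a < a'"
    "binom_sum 1 ?G d = binom_sum 1 ?H d \<longleftrightarrow> 2 \<le> macaulay_low d xs \<and> a' - a \<le> macaulay_low d xs - 1"
    using cmp unfolding macaulay_rep_value[OF rx, symmetric] macaulay_rep_value[OF ry, symmetric]
    by simp_all
qed

lemma macaulay_rep_unique: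
  assumes "macaulay_rep d a xs" and "macaulay_rep d a ys"
  shows "xs = ys"
  using macaulay_rep_compare(1)[OF assms] by blast

lemma macaulay_upper_eq:
  assumes r: "macaulay_rep d a xs"
  shows "macaulay_upper d a = binom_sum 1 (padded_coeff d xs) d"
proof -
  have "(THE xs. macaulay_rep d a xs) = xs"
    using r macaulay_rep_unique[OF _ r] by (rule the_equality)
  then show ?thesis
    using r padded_binom_sum[of xs d 1] unfolding macaulay_upper_def macaulay_rep_def by simp
qed

theorem mainTheorem2:
  fixes d b c :: nat and bs cs :: "nat list"
  assumes "d \<ge> 1" and "0 < b" and "b < c"
    and "macaulay_rep d b bs" and "macaulay_rep d c cs"
  shows "macaulay_upper d b = macaulay_upper d c \<longleftrightarrow>
         (macaulay_low d bs \<ge> 2 \<and> c - b \<le> macaulay_low d bs - 1)"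
proof -
  have "bs \<noteq> cs" using assms(3-5) unfolding macaulay_rep_def by auto
  then show ?thesis
    using macaulay_rep_compare(2)[OF assms(4,5) _ \<open>bs \<noteq> cs\<close>] assms(3)
      macaulay_upper_eq[OF assms(4)] macaulay_upper_eq[OF assms(5)] by simp
qed

end
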